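(* Let $q$ be a prime power, $r$ a prime with $r\mid(q-1)$ and $r\ge3$, and $q/2\le\ell\le q-1$. The quantum Tamo–Barg code $\mathrm{CSS}(C,C)$ with parameters $q,r,\ell$ has distance at least \[ d=(q-1)\left(1-\frac{1}{2r}-\sqrt{\frac{1}{4r^2}+\frac{r-1}{r}\cdot\frac{\ell-1}{q-1}}\right). \]
   Context: $[n]=\{0,\dots,n-1\}$, $\mathbb{F}_q^*=\mathbb{F}_q\setminus\{0\}$. For $S\subseteq\mathbb{Z}_{\ge0}$, $\mathbb{F}_q[X]^S=\{\sum_{i\in S}a_iX^i\}$, $\mathrm{ev}(f)=(f(x))_{x\in\mathbb{F}_q^*}$. Let $S=\{i\in[\ell]:i\not\equiv r-1\pmod r\}\cup\{i\in[q-1]:i\equiv1\pmod r\}$, $C=\mathrm{ev}(\mathbb{F}_q[X]^S)\subseteq\mathbb{F}_q^{q-1}$; for $\ell\ge q/2$, $C^\perp\subseteq C$ and the quantum Tamo–Barg code is the CSS code $\mathrm{CSS}(C,C)=\mathrm{span}\{\sum_{y\in C^\perp}|x+y\rangle:x\in C\}$. Its distance is $\min\{|c|:c\in C\setminus C^\perp\}$, $|c|$ the Hamming weight. *)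

theory Defs
  imports Complex_Main "HOL-Computational_Algebra.Polynomial" "HOL-Computational_Algebra.Primes" "HOL-Library.Cardinality"
begin

definition TB_S :: "nat \<Rightarrow> nat \<Rightarrow> nat \<Rightarrow> nat set" where
  "TB_S q r l = {i. i < l \<and> i mod r \<noteq> (r - 1) mod r} \<union> {i. i < q - 1 \<and> i mod r = 1 mod r}"

definition poly_span :: "nat set \<Rightarrow> 'a::comm_ring_1 poly set" where
  "poly_span S = {f. \<forall>i. coeff f i \<noteq> 0 \<longrightarrow> i \<in> S}"

text \<open>Vectors in F_q^{q-1} are represented as functions on F_q indexed by the
  nonzero elements, normalised to 0 at the point 0.\<close>
definition ev :: "'a::field poly \<Rightarrow> ('a \<Rightarrow> 'a)" where
  "ev f = (\<lambda>x. if x = 0 then 0 else poly f x)"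

definition TB_code :: "nat \<Rightarrow> nat \<Rightarrow> ('a::{finite,field} \<Rightarrow> 'a) set" where
  "TB_code r l = ev ` poly_span (TB_S CARD('a) r l)"

definition dual_code :: "('a::{finite,field} \<Rightarrow> 'a) set \<Rightarrow> ('a \<Rightarrow> 'a) set" where
  "dual_code C = {c. c 0 = 0 \<and> (\<forall>d\<in>C. (\<Sum>x\<in>{x. x \<noteq> 0}. c x * d x) = 0)}"

definition hweight :: "('a::{finite,zero} \<Rightarrow> 'a) \<Rightarrow> nat" where
  "hweight c = card {x. x \<noteq> 0 \<and> c x \<noteq> 0}"

end

theory Submission
  imports Defs "HOL-Analysis.Convex"
begin

text \<open>
  The monomials X^i with i \<equiv> 1 (mod r) evaluate to vectors orthogonal to the whole
  code, so a codeword ev f outside the dual has a coefficient at some exponent i0 \<not>\<equiv> 1.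
  For a nontrivial r-th root of unity \<zeta>, the polynomial f(\<zeta>X) - \<zeta>f(X) loses exactly the
  monomials of exponent \<equiv> 1, so it is nonzero of degree < l; hence at most l - 1 zeros y
  of f have \<zeta>y as a zero too. Summing over \<zeta>, the nonzero zeros Z of f contain at most
  |Z| + (r - 1)(l - 1) pairs with equal r-th powers, while these r-th powers take at most
  (q - 1)/r values. Cauchy--Schwarz gives r|Z|^2 \<le> (q - 1)(|Z| + (r - 1)(l - 1)), and solving
  this quadratic inequality bounds the number |Z| of zero coordinates of the codeword.
\<close>

lemma card_field_nonzero: "card {x::'a::{finite,field}. x \<noteq> 0} = CARD('a) - 1"
proof -
  have "{x::'a. x \<noteq> 0} = UNIV - {0}" by auto
  then show ?thesis by (simp add: card_Diff_singleton)
qed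

lemma two_le_card_field: "2 \<le> CARD('a::{finite,field})"
proof -
  have "card {0, 1::'a} \<le> CARD('a)" by (rule card_mono) auto
  then show ?thesis by simp
qed

lemma power_card_minus_one_eq_1:
  fixes x :: "'a::{finite,field}"
  assumes "x \<noteq> 0"
  shows "x ^ (CARD('a) - 1) = 1"
proof -
  let ?U = "{y::'a. y \<noteq> 0}"
  have "(\<Prod>y\<in>?U. y) = (\<Prod>y\<in>?U. x * y)"
    by (rule prod.reindex_bij_witness[of _ "\<lambda>y. x * y" "\<lambda>y. y / x"]) (use assms in auto)
  also have "\<dots> = x ^ (CARD('a) - 1) * (\<Prod>y\<in>?U. y)"
    by (simp add: prod.distrib card_field_nonzero)
  finally show ?thesis by simp
qed

lemma
  fixes n :: nat
  assumes "n > 0"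
  shows finite_roots_of_unity: "finite {z::'a::idom. z ^ n = 1}"
    and card_roots_of_unity_le: "card {z::'a::idom. z ^ n = 1} \<le> n"
proof -
  define p :: "'a poly" where "p = [:-1:] + monom 1 n"
  have roots: "{z. poly p z = 0} = {z. z ^ n = 1}"
    by (auto simp: p_def poly_monom)
  have "degree p = n"
    using assms unfolding p_def by (subst degree_add_eq_right) (auto simp: degree_monom_eq)
  then have "p \<noteq> 0" using assms by auto
  show "finite {z::'a. z ^ n = 1}" using poly_roots_finite[OF \<open>p \<noteq> 0\<close>] roots by simp
  show "card {z::'a. z ^ n = 1} \<le> n" using card_poly_roots_bound[OF \<open>p \<noteq> 0\<close>] roots \<open>degree p = n\<close> by simp
qed

lemma sum_nonzero_power_eq_0:
  assumes "\<not> (CARD('a::{finite,field}) - 1) dvd k"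
  shows "(\<Sum>x\<in>{x::'a. x \<noteq> 0}. x ^ k) = 0"
proof -
  let ?n = "CARD('a) - 1"
  let ?U = "{x::'a. x \<noteq> 0}"
  have "0 < k mod ?n" "k mod ?n < ?n"
    using assms two_le_card_field[where 'a='a] by (auto simp: dvd_eq_mod_eq_0)
  then have "card {z::'a. z ^ (k mod ?n) = 1} < card ?U"
    using card_roots_of_unity_le[of "k mod ?n", where 'a='a] by (simp add: card_field_nonzero)
  then obtain a :: 'a where "a \<noteq> 0" "a ^ (k mod ?n) \<noteq> 1"
    by (metis (mono_tags, lifting) card_mono finite mem_Collect_eq not_le subsetI)
  moreover have "a ^ k = (a ^ ?n) ^ (k div ?n) * a ^ (k mod ?n)"
    by (metis div_mult_mod_eq power_add power_mult mult.commute)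
  ultimately have "a ^ k \<noteq> 1" using power_card_minus_one_eq_1[of a] by simp
  have "(\<Sum>x\<in>?U. x ^ k) = (\<Sum>x\<in>?U. (a * x) ^ k)"
    by (rule sum.reindex_bij_witness[of _ "\<lambda>y. a * y" "\<lambda>y. y / a"]) (use \<open>a \<noteq> 0\<close> in auto)
  also have "\<dots> = a ^ k * (\<Sum>x\<in>?U. x ^ k)"
    by (simp add: power_mult_distrib sum_distrib_left)
  finally show ?thesis using \<open>a ^ k \<noteq> 1\<close> by (simp add: algebra_simps)
qed

lemma root_of_unity_power_eq_self_iff:
  fixes \<zeta> :: "'a::field"
  assumes "prime r" "\<zeta> ^ r = 1" "\<zeta> \<noteq> 1"
  shows "\<zeta> ^ i = \<zeta> \<longleftrightarrow> i mod r = 1"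
proof -
  have "r > 1" using assms(1) by (rule prime_gt_1_nat)
  have "\<zeta> \<noteq> 0" using assms(2) \<open>r > 1\<close> by (cases "\<zeta> = 0") (auto simp: power_0_left)
  have "\<zeta> ^ i = (\<zeta> ^ r) ^ (i div r) * \<zeta> ^ (i mod r)"
    by (metis div_mult_mod_eq power_add power_mult mult.commute)
  then have reduce: "\<zeta> ^ i = \<zeta> ^ (i mod r)" using assms(2) by simp
  have "i mod r = 1" if "\<zeta> ^ (i mod r) = \<zeta>"
  proof (rule ccontr)
    assume "i mod r \<noteq> 1"
    define j where "j = i mod r - 1"
    have "i mod r \<noteq> 0" using that assms(3) by (metis power_0)
    then have "\<zeta> * \<zeta> ^ j = \<zeta> * 1" using that \<open>i mod r \<noteq> 1\<close> by (simp add: j_def flip: power_Suc)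
    then have "\<zeta> ^ j = 1" using \<open>\<zeta> \<noteq> 0\<close> by simp
    have "i mod r < r" using \<open>r > 1\<close> by simp
    then have "j \<noteq> 0" "j < r" using \<open>i mod r \<noteq> 0\<close> \<open>i mod r \<noteq> 1\<close> by (auto simp: j_def)
    then have "\<not> r dvd j" by (auto dest: dvd_imp_le)
    then have "gcd j r = 1"
      using prime_imp_coprime[OF assms(1)] by (simp add: coprime_commute)
    then obtain x y where "j * x = r * y + 1" using bezout_nat[OF \<open>j \<noteq> 0\<close>, of r] by auto
    then have "(\<zeta> ^ j) ^ x = (\<zeta> ^ r) ^ y * \<zeta>" by (simp flip: power_mult power_Suc2)
    then show False using \<open>\<zeta> ^ j = 1\<close> assms(2,3) by simp
  qed
  then show ?thesis using reduce by auto
qed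

lemma sum_nonzero_poly_mult_eq_0:
  fixes f g :: "'a::{finite,field} poly"
  assumes "\<And>i j. coeff f i \<noteq> 0 \<Longrightarrow> coeff g j \<noteq> 0 \<Longrightarrow> \<not> (CARD('a) - 1) dvd (i + j)"
  shows "(\<Sum>x\<in>{x. x \<noteq> 0}. poly f x * poly g x) = 0"
proof -
  have "poly f x * poly g x = (\<Sum>i\<le>degree f. \<Sum>j\<le>degree g. coeff f i * coeff g j * x ^ (i + j))"
    for x :: 'a
    by (simp add: poly_altdef sum_product power_add mult_ac)
  then have "(\<Sum>x\<in>{x. x \<noteq> 0}. poly f x * poly g x) =
      (\<Sum>x\<in>{x::'a. x \<noteq> 0}. \<Sum>i\<le>degree f. \<Sum>j\<le>degree g. coeff f i * coeff g j * x ^ (i + j))"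
    by simp
  also have "\<dots> = (\<Sum>i\<le>degree f. \<Sum>j\<le>degree g. \<Sum>x\<in>{x::'a. x \<noteq> 0}. coeff f i * coeff g j * x ^ (i + j))"
    by (subst sum.swap) (simp only: sum.swap[of _ "{x. x \<noteq> 0}"])
  also have "\<dots> = (\<Sum>i\<le>degree f. \<Sum>j\<le>degree g. coeff f i * coeff g j * (\<Sum>x\<in>{x::'a. x \<noteq> 0}. x ^ (i + j)))"
    by (simp only: sum_distrib_left)
  also have "\<dots> = 0"
  proof (intro sum.neutral ballI)
    fix i j
    show "coeff f i * coeff g j * (\<Sum>x\<in>{x::'a. x \<noteq> 0}. x ^ (i + j)) = 0"
      using assms[of i j] sum_nonzero_power_eq_0[of "i + j", where 'a='a] by fastforce
  qed
  finally show ?thesis .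
qed

lemma ev_mem_dual_TB_code:
  fixes f :: "'a::{finite,field} poly"
  assumes "3 \<le> r" "r dvd CARD('a) - 1" and "\<And>i. coeff f i \<noteq> 0 \<Longrightarrow> i mod r = 1"
  shows "ev f \<in> dual_code (TB_code r l)"
proof -
  have ndvd: "\<not> (CARD('a) - 1) dvd (i + j)" if "coeff f i \<noteq> 0" "j \<in> TB_S CARD('a) r l" for i j
  proof -
    \<comment> \<open>the exponents j \<equiv> 1 (mod r) of S avoid the class r - 1 only because r \<ge> 3\<close>
    have "j mod r \<noteq> r - 1" "j mod r < r" using that assms(1) by (auto simp: TB_S_def)
    then have "1 + j mod r < r" by arith
    then have "(i + j) mod r = 1 + j mod r"
      using assms(3)[OF that(1)] by (metis mod_add_eq mod_less)
    then have "\<not> r dvd (i + j)" using \<open>j mod r < r\<close> \<open>j mod r \<noteq> r - 1\<close> by (simp add: dvd_eq_mod_eq_0)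
    then show ?thesis using assms(2) dvd_trans by blast
  qed
  show ?thesis
    unfolding dual_code_def
  proof (intro CollectI conjI ballI)
    show "ev f 0 = 0" by (simp add: ev_def)
    fix d :: "'a \<Rightarrow> 'a" assume "d \<in> TB_code r l"
    then obtain g where g: "g \<in> poly_span (TB_S CARD('a) r l)" "d = ev g"
      by (auto simp: TB_code_def)
    have "(\<Sum>x\<in>{x. x \<noteq> 0}. ev f x * d x) = (\<Sum>x\<in>{x. x \<noteq> 0}. poly f x * poly g x)"
      by (simp add: g(2) ev_def)
    also have "\<dots> = 0"
      using ndvd g(1) by (intro sum_nonzero_poly_mult_eq_0) (auto simp: poly_span_def)
    finally show "(\<Sum>x\<in>{x. x \<noteq> 0}. ev f x * d x) = 0" .
  qed
qed

lemma card_common_roots_scaled_le: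
  fixes f :: "'a::idom poly"
  assumes "coeff f k \<noteq> 0" "\<zeta> ^ k \<noteq> \<zeta>"
    and "\<And>i. coeff f i \<noteq> 0 \<Longrightarrow> m < i \<Longrightarrow> \<zeta> ^ i = \<zeta>"
  shows "card {y. poly f y = 0 \<and> poly f (\<zeta> * y) = 0} \<le> m"
proof -
  define D where "D = pcompose f [:0, \<zeta>:] - smult \<zeta> f"
  have coeff_D: "coeff D i = (\<zeta> ^ i - \<zeta>) * coeff f i" for i
    by (simp add: D_def coeff_pcompose_linear algebra_simps)
  have "D \<noteq> 0" using assms(1,2) coeff_D[of k] by auto
  have "degree D \<le> m"
    using assms(3) by (intro degree_le) (auto simp: coeff_D)
  have "{y. poly f y = 0 \<and> poly f (\<zeta> * y) = 0} \<subseteq> {y. poly D y = 0}"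
    by (auto simp: D_def poly_pcompose mult.commute)
  then have "card {y. poly f y = 0 \<and> poly f (\<zeta> * y) = 0} \<le> card {y. poly D y = 0}"
    by (intro card_mono poly_roots_finite \<open>D \<noteq> 0\<close>)
  also have "\<dots> \<le> m" using card_poly_roots_bound[OF \<open>D \<noteq> 0\<close>] \<open>degree D \<le> m\<close> by simp
  finally show ?thesis .
qed

lemma card_squared_le_card_image_mult_card_collisions:
  assumes "finite Z"
  shows "card Z ^ 2 \<le> card (\<phi> ` Z) * card {(y, y') \<in> Z \<times> Z. \<phi> y = \<phi> y'}"
proof -
  define F where "F b = {y \<in> Z. \<phi> y = b}" for b
  have "Z = (\<Union>b\<in>\<phi> ` Z. F b)" by (auto simp: F_def)
  also have "card \<dots> = (\<Sum>b\<in>\<phi> ` Z. card (F b))"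
    using assms by (intro card_UN_disjoint) (auto simp: F_def)
  finally have "card Z = (\<Sum>b\<in>\<phi> ` Z. card (F b))" .
  have "{(y, y') \<in> Z \<times> Z. \<phi> y = \<phi> y'} = (\<Union>b\<in>\<phi> ` Z. F b \<times> F b)"
    by (auto simp: F_def)
  also have "card \<dots> = (\<Sum>b\<in>\<phi> ` Z. card (F b) ^ 2)"
    using assms by (subst card_UN_disjoint) (auto simp: F_def power2_eq_square)
  finally have collisions: "card {(y, y') \<in> Z \<times> Z. \<phi> y = \<phi> y'} = (\<Sum>b\<in>\<phi> ` Z. card (F b) ^ 2)" .
  have "real (card Z ^ 2) \<le> (\<Sum>b\<in>\<phi> ` Z. real (card (F b)) ^ 2) * card (\<phi> ` Z)"
    unfolding \<open>card Z = _\<close> of_nat_sum of_nat_power by (rule sum_squared_le_sum_of_squares)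
  also have "\<dots> = real (card (\<phi> ` Z) * card {(y, y') \<in> Z \<times> Z. \<phi> y = \<phi> y'})"
    unfolding collisions by (simp add: of_nat_sum mult.commute)
  finally show ?thesis by (simp only: of_nat_le_iff)
qed

lemma card_power_collisions_eq_sum_roots_of_unity:
  fixes Z :: "'a::field set"
  assumes "finite Z" "0 \<notin> Z" "0 < r"
  shows "card {(y, y') \<in> Z \<times> Z. y ^ r = y' ^ r} = (\<Sum>\<zeta>\<in>{\<zeta>. \<zeta> ^ r = 1}. card {y \<in> Z. \<zeta> * y \<in> Z})"
proof -
  have "bij_betw (\<lambda>(\<zeta>, y). (y, \<zeta> * y)) (SIGMA \<zeta>:{\<zeta>. \<zeta> ^ r = 1}. {y \<in> Z. \<zeta> * y \<in> Z})
      {(y, y') \<in> Z \<times> Z. y ^ r = y' ^ r}"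
    by (rule bij_betwI[where g = "\<lambda>(y, y'). (y' / y, y)"])
      (use assms(2) in \<open>auto simp: power_mult_distrib power_divide\<close>)
  then have "card {(y, y') \<in> Z \<times> Z. y ^ r = y' ^ r} = card (SIGMA \<zeta>:{\<zeta>. \<zeta> ^ r = 1}. {y \<in> Z. \<zeta> * y \<in> Z})"
    by (simp add: bij_betw_same_card)
  also have "\<dots> = (\<Sum>\<zeta>\<in>{\<zeta>. \<zeta> ^ r = 1}. card {y \<in> Z. \<zeta> * y \<in> Z})"
    using finite_roots_of_unity[OF assms(3)] assms(1) by (intro card_SigmaI) auto
  finally show ?thesis .
qed

lemma card_image_power_mult_le:
  fixes Z :: "'a::{finite,field} set"
  assumes "0 \<notin> Z" "0 < r" "r dvd CARD('a) - 1"
  shows "card ((\<lambda>y. y ^ r) ` Z) * r \<le> CARD('a) - 1"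
proof -
  let ?n = "CARD('a) - 1"
  have "r * (?n div r) = ?n" using assms(3) by simp
  moreover have "?n > 0" using two_le_card_field[where 'a='a] by simp
  ultimately have "?n div r > 0" by (metis gr0I mult_0_right)
  have "(\<lambda>y. y ^ r) ` Z \<subseteq> {b. b ^ (?n div r) = 1}"
  proof (intro image_subsetI CollectI)
    fix y assume "y \<in> Z"
    then have "y \<noteq> 0" using assms(1) by auto
    then show "(y ^ r) ^ (?n div r) = 1"
      using \<open>r * (?n div r) = ?n\<close> power_card_minus_one_eq_1 by (metis power_mult)
  qed
  then have "card ((\<lambda>y. y ^ r) ` Z) \<le> card {b::'a. b ^ (?n div r) = 1}"
    by (intro card_mono finite_roots_of_unity \<open>?n div r > 0\<close>)
  also have "\<dots> \<le> ?n div r"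
    by (intro card_roots_of_unity_le \<open>?n div r > 0\<close>)
  finally have "card ((\<lambda>y. y ^ r) ` Z) * r \<le> (?n div r) * r"
    by (rule mult_le_mono1)
  also have "\<dots> = ?n"
    using \<open>r * (?n div r) = ?n\<close> by (simp add: mult.commute)
  finally show ?thesis .
qed

lemma TB_card_power_collisions_le:
  fixes f :: "'a::field poly"
  assumes "prime r" "f \<in> poly_span (TB_S q r l)" "coeff f i0 \<noteq> 0" "i0 mod r \<noteq> 1"
    and "finite Z" "0 \<notin> Z" "\<And>y. y \<in> Z \<Longrightarrow> poly f y = 0"
  shows "card {(y, y') \<in> Z \<times> Z. y ^ r = y' ^ r} \<le> card Z + (r - 1) * (l - 1)"
proof -
  let ?M = "{\<zeta>::'a. \<zeta> ^ r = 1}"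
  have "r > 1" using assms(1) by (rule prime_gt_1_nat)
  have "finite ?M" "card ?M \<le> r"
    using finite_roots_of_unity[of r, where 'a='a] card_roots_of_unity_le[of r, where 'a='a] \<open>r > 1\<close>
    by auto
  have rotated: "card {y \<in> Z. \<zeta> * y \<in> Z} \<le> l - 1" if "\<zeta> \<in> ?M - {1}" for \<zeta>
  proof -
    have "\<zeta> ^ i = \<zeta> \<longleftrightarrow> i mod r = 1" for i
      using root_of_unity_power_eq_self_iff assms(1) that by blast
    moreover have "i mod r = 1" if "coeff f i \<noteq> 0" "l - 1 < i" for i
      using that assms(2) \<open>r > 1\<close> by (auto simp: poly_span_def TB_S_def)
    ultimately have "card {y. poly f y = 0 \<and> poly f (\<zeta> * y) = 0} \<le> l - 1"
      using assms(3,4) by (intro card_common_roots_scaled_le[where k = i0]) auto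
    moreover have "card {y \<in> Z. \<zeta> * y \<in> Z} \<le> card {y. poly f y = 0 \<and> poly f (\<zeta> * y) = 0}"
    proof (rule card_mono)
      have "f \<noteq> 0" using assms(3) by auto
      then have "finite {y. poly f y = 0}" by (rule poly_roots_finite)
      then show "finite {y. poly f y = 0 \<and> poly f (\<zeta> * y) = 0}"
        by (rule finite_subset[rotated]) auto
      show "{y \<in> Z. \<zeta> * y \<in> Z} \<subseteq> {y. poly f y = 0 \<and> poly f (\<zeta> * y) = 0}"
        using assms(7) by auto
    qed
    ultimately show ?thesis by linarith
  qed
  have "card {(y, y') \<in> Z \<times> Z. y ^ r = y' ^ r} = (\<Sum>\<zeta>\<in>?M. card {y \<in> Z. \<zeta> * y \<in> Z})"
    using assms(5,6) \<open>r > 1\<close> by (intro card_power_collisions_eq_sum_roots_of_unity) auto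
  also have "\<dots> = card Z + (\<Sum>\<zeta>\<in>?M - {1}. card {y \<in> Z. \<zeta> * y \<in> Z})"
    using sum.remove[OF \<open>finite ?M\<close>, of 1 "\<lambda>\<zeta>. card {y \<in> Z. \<zeta> * y \<in> Z}"]
    by (simp add: Int_absorb)
  also have "(\<Sum>\<zeta>\<in>?M - {1}. card {y \<in> Z. \<zeta> * y \<in> Z}) \<le> card (?M - {1}) * (l - 1)"
    using sum_bounded_above[of "?M - {1}" "\<lambda>\<zeta>. card {y \<in> Z. \<zeta> * y \<in> Z}" "l - 1", OF rotated]
    by simp
  also have "card (?M - {1}) \<le> r - 1"
    using \<open>card ?M \<le> r\<close> by (simp add: card_Diff_singleton)
  finally show ?thesis by simp
qed

lemma TB_card_field_nonzero_roots_quadratic_bound: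
  fixes f :: "'a::{finite,field} poly"
  assumes "prime r" "r dvd CARD('a) - 1" "f \<in> poly_span (TB_S q r l)"
    and "coeff f i0 \<noteq> 0" "i0 mod r \<noteq> 1"
  defines "z \<equiv> card {y. y \<noteq> 0 \<and> poly f y = 0}"
  shows "r * z ^ 2 \<le> (CARD('a) - 1) * (z + (r - 1) * (l - 1))"
proof -
  define Z where "Z = {y::'a. y \<noteq> 0 \<and> poly f y = 0}"
  define collisions where "collisions = card {(y, y') \<in> Z \<times> Z. y ^ r = y' ^ r}"
  have "z = card Z" by (simp add: z_def Z_def)
  have Z: "finite Z" "0 \<notin> Z" "\<And>y. y \<in> Z \<Longrightarrow> poly f y = 0" by (auto simp: Z_def)
  have "r > 0" using assms(1) by (simp add: prime_gt_0_nat)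
  have "r * z ^ 2 \<le> r * (card ((\<lambda>y. y ^ r) ` Z) * collisions)"
    unfolding \<open>z = card Z\<close> collisions_def
    by (intro mult_le_mono2 card_squared_le_card_image_mult_card_collisions Z(1))
  also have "\<dots> = (card ((\<lambda>y. y ^ r) ` Z) * r) * collisions" by simp
  also have "\<dots> \<le> (CARD('a) - 1) * collisions"
    using card_image_power_mult_le[OF Z(2) \<open>r > 0\<close> assms(2)] by (rule mult_le_mono1)
  also have "\<dots> \<le> (CARD('a) - 1) * (z + (r - 1) * (l - 1))"
    unfolding collisions_def \<open>z = card Z\<close>
    by (rule mult_le_mono2[OF TB_card_power_collisions_le[OF assms(1,3,4,5) Z]])
  finally show ?thesis .
qed

lemma hweight_ev:
  fixes f :: "'a::{finite,field} poly"
  shows "hweight (ev f) = (CARD('a) - 1) - card {y. y \<noteq> 0 \<and> poly f y = 0}"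
proof -
  have "{x. x \<noteq> 0 \<and> ev f x \<noteq> 0} = {x::'a. x \<noteq> 0} - {y. y \<noteq> 0 \<and> poly f y = 0}"
    by (auto simp: ev_def)
  then show ?thesis
    by (simp add: hweight_def card_Diff_subset card_field_nonzero Collect_mono)
qed

lemma quadratic_ineq_imp_le_root:
  fixes n r z L :: real
  assumes "0 < n" "0 < r" "r * z\<^sup>2 \<le> n * (z + (r - 1) * L)"
  shows "z \<le> n * (1 / (2 * r) + sqrt (1 / (4 * r\<^sup>2) + (r - 1) / r * (L / n)))"
proof -
  define w where "w = z / n"
  have "r * w\<^sup>2 \<le> w + (r - 1) * (L / n)"
    using assms(3) assms(1) by (simp add: w_def field_simps power2_eq_square)
  then have "w\<^sup>2 \<le> (w + (r - 1) * (L / n)) / r"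
    using assms(2) by (simp add: pos_le_divide_eq mult.commute)
  also have "\<dots> = w / r + (r - 1) / r * (L / n)"
    by (simp add: add_divide_distrib)
  finally have "w\<^sup>2 \<le> w / r + (r - 1) / r * (L / n)" .
  moreover have "(w - 1 / (2 * r))\<^sup>2 = w\<^sup>2 - w / r + 1 / (4 * r\<^sup>2)"
    using assms(2) by (simp add: power2_eq_square field_simps)
  ultimately have "(w - 1 / (2 * r))\<^sup>2 \<le> 1 / (4 * r\<^sup>2) + (r - 1) / r * (L / n)"
    by linarith
  then have "w \<le> 1 / (2 * r) + sqrt (1 / (4 * r\<^sup>2) + (r - 1) / r * (L / n))"
    using real_le_rsqrt by fastforce
  then show ?thesis
    using assms(1) by (simp add: w_def field_simps)
qed

theorem theorem6p2:
  fixes r l :: nat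
  assumes "prime r" and "r dvd CARD('a::{finite,field}) - 1" and "r \<ge> 3"
    and "real CARD('a) / 2 \<le> real l" and "l \<le> CARD('a) - 1"
  shows "\<forall>c \<in> (TB_code r l :: ('a \<Rightarrow> 'a) set) - dual_code (TB_code r l).
           real (hweight c) \<ge> (real CARD('a) - 1) *
             (1 - 1 / (2 * real r) - sqrt (1 / (4 * real r ^ 2)
                + (real r - 1) / real r * ((real l - 1) / (real CARD('a) - 1))))"
proof
  fix c assume c: "c \<in> (TB_code r l :: ('a \<Rightarrow> 'a) set) - dual_code (TB_code r l)"
  then obtain f where "f \<in> poly_span (TB_S CARD('a) r l)" and "c = ev f"
    by (auto simp: TB_code_def)
  then obtain i0 where "coeff f i0 \<noteq> 0" "i0 mod r \<noteq> 1"
    using c ev_mem_dual_TB_code[OF assms(3,2)] by blast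
  define z where "z = card {y::'a. y \<noteq> 0 \<and> poly f y = 0}"
  have "r * z ^ 2 \<le> (CARD('a) - 1) * (z + (r - 1) * (l - 1))"
    unfolding z_def by (rule TB_card_field_nonzero_roots_quadratic_bound) fact+
  moreover have "2 \<le> CARD('a)" "1 \<le> l" using two_le_card_field[where 'a='a] assms(4) by auto
  ultimately have "real r * (real z)\<^sup>2 \<le> (real CARD('a) - 1) * (real z + (real r - 1) * (real l - 1))"
    using assms(3) by (auto simp: of_nat_diff dest!: of_nat_mono[where 'a=real])
  then have "real z \<le> (real CARD('a) - 1) * (1 / (2 * real r) + sqrt (1 / (4 * real r ^ 2)
                + (real r - 1) / real r * ((real l - 1) / (real CARD('a) - 1))))"
    using \<open>2 \<le> CARD('a)\<close> assms(3) by (intro quadratic_ineq_imp_le_root) auto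
  moreover have "z \<le> CARD('a) - 1"
    unfolding z_def card_field_nonzero[symmetric] by (intro card_mono) auto
  then have "real (hweight c) = (real CARD('a) - 1) - real z"
    using \<open>c = ev f\<close> \<open>2 \<le> CARD('a)\<close> by (simp add: hweight_ev z_def of_nat_diff)
  ultimately show "real (hweight c) \<ge> (real CARD('a) - 1) *
             (1 - 1 / (2 * real r) - sqrt (1 / (4 * real r ^ 2)
                + (real r - 1) / real r * ((real l - 1) / (real CARD('a) - 1))))"
    by (simp add: algebra_simps)
qed

end
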